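(* Let $k$ be a field, $R$ a commutative $k$-algebra, $M$ an $R$-module, $x$ an $n$-tuple in $R$, $R'=k[x]\subseteq R$, and let $y$ be an $m$-tuple in $R'$ with $\langle y\rangle=\langle x\rangle$ as ideals of $R'$. Let $q\in k[X_1,\ldots,X_n]$ be a polynomial with constant term $q(0)$, and let $z=(y,q(x))$, an $(m+1)$-tuple in $R$. If $b=(0,\lambda)\in\sigma(z,M)$ for some $\lambda\in k$ (with $0\in k^m$), then $0\in\sigma(y,M)$ and $\lambda=q(0)$. Moreover, for this $b$, $\dim_k H_p(z-b,M)=\dim_k H_{p-1}(y,M)+\dim_k H_p(y,M)$ for all $p$, and $i(z-b)=0$ whenever $i(y)<\infty$.
   Context: For a commutative $k$-algebra $R$, an $R$-module $M$ and an $n$-tuple $y=(y_1,\ldots,y_n)$ in $R$, the Koszul complex $\operatorname{Kos}(y,M)$ is $0\leftarrow M\leftarrow M\otimes_k\wedge^1k^n\leftarrow\cdots\leftarrow M\otimes_k\wedge^nk^n\leftarrow 0$ with differential $\partial(m\otimes e_{i_1}\wedge\cdots\wedge e_{i_p})=\sum_{s=1}^p(-1)^{s+1}y_{i_s}m\otimes e_{i_1}\wedge\cdots\wedge\widehat{e_{i_s}}\wedge\cdots\wedge e_{i_p}$; its homology groups are denoted $H_p(y,M)$; $H_{-1}:=0$. For $a\in k^n$, $y-a=(y_1-a_1,\ldots,y_n-a_n)$. The Taylor spectrum $\sigma(y,M)$ is the set of $a\in k^n$ such that $\operatorname{Kos}(y-a,M)$ is not exact. The index is $i(y)=\sum_{p=0}^n(-1)^{p+1}\dim_k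 H_p(y,M)$, defined (written $i(y)<\infty$) when all these dimensions are finite. *)

theory Defs
  imports Main "HOL-Library.Poly_Mapping" "HOL-Library.Extended_Nat" "HOL-Library.Function_Algebras"
begin

text \<open>A commutative k-algebra R is given by a unital ring homomorphism
  phi from the field k into the commutative ring R.\<close>
definition alg_hom :: "('k::field \<Rightarrow> 'r::comm_ring_1) \<Rightarrow> bool" where
  "alg_hom phi \<longleftrightarrow> phi 1 = 1 \<and> (\<forall>a b. phi (a + b) = phi a + phi b \<and> phi (a * b) = phi a * phi b)"

text \<open>Polynomials in k[X_0,...,X_(n-1)]: coefficient maps from monomials (exponent vectors) to k.\<close>
definition mpoly_vars_in :: "nat \<Rightarrow> (((nat \<Rightarrow>\<^sub>0 nat) \<Rightarrow>\<^sub>0 'k::zero)) \<Rightarrow> bool" where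
  "mpoly_vars_in n q \<longleftrightarrow> (\<forall>mo\<in>Poly_Mapping.keys q. Poly_Mapping.keys mo \<subseteq> {..<n})"

definition mpoly_eval :: "('k::field \<Rightarrow> 'r::comm_ring_1) \<Rightarrow> (nat \<Rightarrow> 'r) \<Rightarrow> (((nat \<Rightarrow>\<^sub>0 nat) \<Rightarrow>\<^sub>0 'k)) \<Rightarrow> 'r" where
  "mpoly_eval phi x q = (\<Sum>mo\<in>Poly_Mapping.keys q. phi (Poly_Mapping.lookup q mo) * (\<Prod>i\<in>Poly_Mapping.keys mo. x i ^ Poly_Mapping.lookup mo i))"

definition k_subalg :: "('k::field \<Rightarrow> 'r::comm_ring_1) \<Rightarrow> (nat \<Rightarrow> 'r) \<Rightarrow> nat \<Rightarrow> 'r set" where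
  "k_subalg phi x n = {mpoly_eval phi x q | q. mpoly_vars_in n q}"

definition ideal_gen :: "'r::comm_ring_1 set \<Rightarrow> (nat \<Rightarrow> 'r) \<Rightarrow> nat \<Rightarrow> 'r set" where
  "ideal_gen S g l = {\<Sum>i<l. r i * g i | r. \<forall>i<l. r i \<in> S}"

definition indep_mod :: "('k::field \<Rightarrow> 'v \<Rightarrow> 'v::ab_group_add) \<Rightarrow> 'v set \<Rightarrow> 'v set \<Rightarrow> bool" where
  "indep_mod sc B S \<longleftrightarrow> (\<forall>c. (\<Sum>s\<in>S. sc (c s) s) \<in> B \<longrightarrow> (\<forall>s\<in>S. c s = 0))"

text \<open>dim_k (A / B) as an extended natural (infinity if infinite-dimensional).\<close>
definition qdim :: "('k::field \<Rightarrow> 'v \<Rightarrow> 'v::ab_group_add) \<Rightarrow> 'v set \<Rightarrow> 'v set \<Rightarrow> enat" where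
  "qdim sc A B = Sup {enat (card S) | S. finite S \<and> S \<subseteq> A \<and> indep_mod sc B S}"

text \<open>Chains of degree p: M \<otimes> \<wedge>^p k^n, represented as functions from subsets I of
  {0..<n} with card I = p to M (the coefficient of e_I), zero elsewhere.\<close>
definition kos_chains :: "nat \<Rightarrow> int \<Rightarrow> (nat set \<Rightarrow> 'm::ab_group_add) set" where
  "kos_chains n p = {c. \<forall>I. c I \<noteq> 0 \<longrightarrow> I \<subseteq> {..<n} \<and> int (card I) = p}"

definition kos_diff :: "('r::comm_ring_1 \<Rightarrow> 'm::ab_group_add \<Rightarrow> 'm) \<Rightarrow> (nat \<Rightarrow> 'r) \<Rightarrow> nat
    \<Rightarrow> (nat set \<Rightarrow> 'm) \<Rightarrow> (nat set \<Rightarrow> 'm)" where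
  "kos_diff act y n c = (\<lambda>J. \<Sum>i\<in>{..<n} - J. act ((-1) ^ card {j\<in>J. j < i} * y i) (c (insert i J)))"

definition kos_cycles :: "('r::comm_ring_1 \<Rightarrow> 'm::ab_group_add \<Rightarrow> 'm) \<Rightarrow> (nat \<Rightarrow> 'r) \<Rightarrow> nat \<Rightarrow> int \<Rightarrow> (nat set \<Rightarrow> 'm) set" where
  "kos_cycles act y n p = {c \<in> kos_chains n p. kos_diff act y n c = (\<lambda>_. 0)}"

definition kos_boundaries :: "('r::comm_ring_1 \<Rightarrow> 'm::ab_group_add \<Rightarrow> 'm) \<Rightarrow> (nat \<Rightarrow> 'r) \<Rightarrow> nat \<Rightarrow> int \<Rightarrow> (nat set \<Rightarrow> 'm) set" where
  "kos_boundaries act y n p = kos_diff act y n ` kos_chains n (p + 1)"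

text \<open>dim_k H_p(y, M); for p < 0 (in particular p = -1) this is 0.\<close>
definition kos_hdim :: "('k::field \<Rightarrow> 'r::comm_ring_1) \<Rightarrow> ('r \<Rightarrow> 'm::ab_group_add \<Rightarrow> 'm) \<Rightarrow> (nat \<Rightarrow> 'r) \<Rightarrow> nat \<Rightarrow> int \<Rightarrow> enat" where
  "kos_hdim phi act y n p =
     qdim (\<lambda>a c. (\<lambda>I. act (phi a) (c I))) (kos_cycles act y n p) (kos_boundaries act y n p)"

definition kos_exact :: "('r::comm_ring_1 \<Rightarrow> 'm::ab_group_add \<Rightarrow> 'm) \<Rightarrow> (nat \<Rightarrow> 'r) \<Rightarrow> nat \<Rightarrow> bool" where
  "kos_exact act y n \<longleftrightarrow> (\<forall>p. kos_cycles act y n p \<subseteq> kos_boundaries act y n p)"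

definition tuple_sub :: "('k::field \<Rightarrow> 'r::comm_ring_1) \<Rightarrow> (nat \<Rightarrow> 'r) \<Rightarrow> (nat \<Rightarrow> 'k) \<Rightarrow> nat \<Rightarrow> 'r" where
  "tuple_sub phi y a = (\<lambda>i. y i - phi (a i))"

text \<open>Taylor spectrum; points of k^n are functions nat => k vanishing from index n on.\<close>
definition taylor_spectrum :: "('k::field \<Rightarrow> 'r::comm_ring_1) \<Rightarrow> ('r \<Rightarrow> 'm::ab_group_add \<Rightarrow> 'm) \<Rightarrow> (nat \<Rightarrow> 'r) \<Rightarrow> nat \<Rightarrow> (nat \<Rightarrow> 'k) set" where
  "taylor_spectrum phi act y n = {a. (\<forall>i\<ge>n. a i = 0) \<and> \<not> kos_exact act (tuple_sub phi y a) n}"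

definition kos_index_finite :: "('k::field \<Rightarrow> 'r::comm_ring_1) \<Rightarrow> ('r \<Rightarrow> 'm::ab_group_add \<Rightarrow> 'm) \<Rightarrow> (nat \<Rightarrow> 'r) \<Rightarrow> nat \<Rightarrow> bool" where
  "kos_index_finite phi act y n \<longleftrightarrow> (\<forall>p\<le>n. kos_hdim phi act y n (int p) \<noteq> \<infinity>)"

definition kos_index :: "('k::field \<Rightarrow> 'r::comm_ring_1) \<Rightarrow> ('r \<Rightarrow> 'm::ab_group_add \<Rightarrow> 'm) \<Rightarrow> (nat \<Rightarrow> 'r) \<Rightarrow> nat \<Rightarrow> int" where
  "kos_index phi act y n = (\<Sum>p=0..n. (-1) ^ (p + 1) * int (the_enat (kos_hdim phi act y n (int p))))"

end

theory Submission
  imports Defs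
begin

text \<open>Write \<open>z - b = (y, q(x) - \<lambda>)\<close>. Since \<open>\<langle>x\<rangle> = \<langle>y\<rangle>\<close> in \<open>k[x]\<close>, we have
  \<open>q(x) - q(0) = \<Sum>j<m. r\<^sub>j y\<^sub>j\<close>, so the last entry is \<open>u + \<Sum>j<m. r\<^sub>j y\<^sub>j\<close> with the scalar
  \<open>u = q(0) - \<lambda>\<close>. The Koszul complex of \<open>z - b\<close> is the mapping cone of multiplication by this
  element on \<open>Kos(y, M)\<close>, and multiplication by \<open>\<Sum>j<m. r\<^sub>j y\<^sub>j\<close> is null-homotopic there
  (wedge with \<open>\<Sum>j<m. r\<^sub>j e\<^sub>j\<close>). So it is, up to isomorphism, the cone of multiplication by \<open>u\<close>:
  if \<open>u \<noteq> 0\<close> it is exact, contradicting \<open>b \<in> \<sigma>(z, M)\<close>; hence \<open>\<lambda> = q(0)\<close>, the cone splits as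
  \<open>H\<^sub>p(z - b) \<cong> H\<^sub>p(y) \<oplus> H\<^sub>p\<^sub>-\<^sub>1(y)\<close>, and the remaining claims follow, the index by
  telescoping.\<close>

section \<open>Dimension of a quotient of subspaces\<close>

lemma enat_Sup_plus_Sup_le:
  fixes X1 X2 :: "enat set"
  assumes "X1 \<noteq> {}" "X2 \<noteq> {}" "\<And>x y. x \<in> X1 \<Longrightarrow> y \<in> X2 \<Longrightarrow> x + y \<le> s"
  shows "Sup X1 + Sup X2 \<le> s"
proof (cases s)
  case (enat N)
  obtain x0 y0 where x0: "x0 \<in> X1" and y0: "y0 \<in> X2" using assms(1,2) by blast
  have "x \<le> enat N" if "x \<in> X1" for x
    using assms(3)[OF that y0] enat by (metis le_iff_add order.trans)
  hence "finite X1" using finite_enat_bounded by blast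
  have "y \<le> enat N" if "y \<in> X2" for y
    using assms(3)[OF x0 that] enat by (metis add.commute le_iff_add order.trans)
  hence "finite X2" using finite_enat_bounded by blast
  have "Sup X1 \<in> X1" "Sup X2 \<in> X2"
    using \<open>finite X1\<close> \<open>finite X2\<close> assms(1,2) unfolding Sup_enat_def by simp_all
  thus ?thesis using assms(3) by blast
qed simp

text \<open>Indexed variant of \<open>indep_mod\<close>: the component families built in \<open>qdim_sum_le\<close>
  may repeat vectors.\<close>
definition indep_mod_family ::
    "('k::field \<Rightarrow> 'v \<Rightarrow> 'v::ab_group_add) \<Rightarrow> 'v set \<Rightarrow> ('i \<Rightarrow> 'v) \<Rightarrow> 'i set \<Rightarrow> bool" where
  "indep_mod_family sc B f I \<longleftrightarrow> (\<forall>c. (\<Sum>i\<in>I. sc (c i) (f i)) \<in> B \<longrightarrow> (\<forall>i\<in>I. c i = 0))"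

context vector_space
begin

lemma indep_mod_family_inj_on:
  assumes "indep_mod_family scale B f I" "finite I" "0 \<in> B"
  shows "inj_on f I"
proof (rule inj_onI, rule ccontr)
  fix i j assume ij: "i \<in> I" "j \<in> I" "f i = f j" "i \<noteq> j"
  define c where "c t = (if t = i then 1 else if t = j then -1 else (0::'a))" for t
  have "(\<Sum>t\<in>I. c t *s f t) = (\<Sum>t\<in>{i,j}. c t *s f t)"
    using assms(2) ij by (intro sum.mono_neutral_right) (auto simp: c_def)
  also have "\<dots> = 0" using ij by (simp add: c_def)
  finally have "c i = 0" using assms(1,3) ij unfolding indep_mod_family_def by metis
  thus False by (simp add: c_def)
qed

lemma indep_mod_image:
  assumes "indep_mod_family scale B f I" "finite I" "0 \<in> B"
  shows "indep_mod scale B (f ` I)"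
  unfolding indep_mod_def
proof (intro allI impI ballI)
  fix c s assume h: "(\<Sum>s\<in>f ` I. c s *s s) \<in> B" "s \<in> f ` I"
  have "(\<Sum>i\<in>I. (c \<circ> f) i *s f i) \<in> B"
    using h(1) sum.reindex[OF indep_mod_family_inj_on[OF assms], of "\<lambda>s. c s *s s"] by (simp add: o_def)
  thus "c s = 0" using assms(1) h(2) unfolding indep_mod_family_def by fastforce
qed

lemma card_le_qdim:
  assumes "indep_mod_family scale B f I" "finite I" "0 \<in> B" "f ` I \<subseteq> A"
  shows "enat (card I) \<le> qdim scale A B"
proof -
  have "card (f ` I) = card I" using indep_mod_family_inj_on[OF assms(1-3)] card_image by blast
  moreover have "f ` I \<in> {S. finite S \<and> S \<subseteq> A \<and> indep_mod scale B S}"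
    using indep_mod_image[OF assms(1-3)] assms(2,4) by auto
  ultimately show ?thesis unfolding qdim_def by (metis (mono_tags, lifting) Sup_upper mem_Collect_eq)
qed

lemma qdim_le:
  assumes "\<And>S. finite S \<Longrightarrow> S \<subseteq> A \<Longrightarrow> indep_mod scale B S \<Longrightarrow> enat (card S) \<le> d"
  shows "qdim scale A B \<le> d"
  unfolding qdim_def using assms by (auto intro!: Sup_least)

lemma qdim_eq_0:
  assumes "A \<subseteq> B"
  shows "qdim scale A B = 0"
proof -
  have "S = {}" if "finite S" "S \<subseteq> A" "indep_mod scale B S" for S
  proof (rule ccontr)
    assume "S \<noteq> {}"
    then obtain s where s: "s \<in> S" by blast
    define c where "c t = (if t = s then 1 else (0::'a))" for t
    have "(\<Sum>t\<in>S. c t *s t) = (\<Sum>t\<in>{s}. c t *s t)"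
      using that s by (intro sum.mono_neutral_right) (auto simp: c_def)
    hence "(\<Sum>t\<in>S. c t *s t) \<in> B" using that s assms by (auto simp: c_def)
    hence "c s = 0" using that s unfolding indep_mod_def by blast
    thus False by (simp add: c_def)
  qed
  hence "qdim scale A B \<le> 0" by (intro qdim_le) (simp add: zero_enat_def)
  thus ?thesis by simp
qed

lemma dependent_mod_insert:
  assumes "subspace B" "indep_mod_family scale B f U" "finite U" "v \<notin> U"
    "\<not> indep_mod_family scale B f (insert v U)"
  shows "\<exists>c. f v - (\<Sum>u\<in>U. c u *s f u) \<in> B"
proof -
  obtain c where c: "(\<Sum>i\<in>insert v U. c i *s f i) \<in> B" "\<exists>i\<in>insert v U. c i \<noteq> 0"
    using assms(5) unfolding indep_mod_family_def by blast
  have eq: "(\<Sum>i\<in>insert v U. c i *s f i) = c v *s f v + (\<Sum>i\<in>U. c i *s f i)"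
    using assms(3,4) by simp
  have cv: "c v \<noteq> 0"
  proof
    assume "c v = 0"
    hence "\<forall>i\<in>U. c i = 0" using c(1) eq assms(2) unfolding indep_mod_family_def by simp
    thus False using c(2) \<open>c v = 0\<close> by auto
  qed
  have "inverse (c v) *s (\<Sum>i\<in>insert v U. c i *s f i) \<in> B"
    using c(1) assms(1) subspace_scale by blast
  also have "inverse (c v) *s (\<Sum>i\<in>insert v U. c i *s f i)
     = f v - (\<Sum>u\<in>U. (- (inverse (c v) * c u)) *s f u)"
    using cv by (simp add: eq scale_right_distrib scale_sum_right sum_negf)
  finally show ?thesis by (rule exI[where x="\<lambda>u. - (inverse (c v) * c u)"])
qed

lemma obtain_maximal_indep_mod_subfamily:
  assumes "subspace B" "finite S"
  obtains U where "U \<subseteq> S" "indep_mod_family scale B f U"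
    "\<And>s. s \<in> S - U \<Longrightarrow> \<exists>c. f s - (\<Sum>u\<in>U. c u *s f u) \<in> B"
proof -
  define Us where "Us = {U. U \<subseteq> S \<and> indep_mod_family scale B f U}"
  have "finite Us" unfolding Us_def using assms(2) by simp
  moreover have "{} \<in> Us" unfolding Us_def indep_mod_family_def by simp
  ultimately obtain U where U: "U \<in> Us" and Umax: "\<And>U'. U' \<in> Us \<Longrightarrow> card U' \<le> card U"
    using Max_in[of "card ` Us"] by (metis (no_types, lifting) Max_ge empty_iff finite_imageI image_iff)
  have US: "U \<subseteq> S" and ind: "indep_mod_family scale B f U" using U unfolding Us_def by auto
  have finU: "finite U" using US assms(2) finite_subset by blast
  have "\<exists>c. f s - (\<Sum>u\<in>U. c u *s f u) \<in> B" if s: "s \<in> S - U" for s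
  proof -
    have "insert s U \<notin> Us" using Umax[of "insert s U"] s finU by fastforce
    thus ?thesis using dependent_mod_insert[OF assms(1) ind finU] s US unfolding Us_def by auto
  qed
  thus ?thesis using that US ind by blast
qed

lemma indep_mod_family_reduce:
  assumes "indep_mod scale B S" "finite S" "U \<subseteq> S"
  shows "indep_mod_family scale B (\<lambda>s. s - (\<Sum>u\<in>U. C s u *s u)) (S - U)"
  unfolding indep_mod_family_def
proof (intro allI impI)
  fix e assume "(\<Sum>s\<in>S - U. e s *s (s - (\<Sum>u\<in>U. C s u *s u))) \<in> B"
  define E where "E t = (if t \<in> U then - (\<Sum>s\<in>S - U. e s * C s t) else e t)" for t
  have "(\<Sum>s\<in>S - U. e s *s (s - (\<Sum>u\<in>U. C s u *s u)))
      = (\<Sum>s\<in>S - U. e s *s s) - (\<Sum>s\<in>S - U. \<Sum>u\<in>U. (e s * C s u) *s u)"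
    by (simp add: scale_right_diff_distrib scale_sum_right sum_subtractf)
  also have "(\<Sum>s\<in>S - U. \<Sum>u\<in>U. (e s * C s u) *s u) = (\<Sum>u\<in>U. (\<Sum>s\<in>S - U. e s * C s u) *s u)"
    by (subst sum.swap) (simp add: scale_sum_left)
  also have "(\<Sum>s\<in>S - U. e s *s s) - (\<Sum>u\<in>U. (\<Sum>s\<in>S - U. e s * C s u) *s u)
      = (\<Sum>t\<in>S - U. E t *s t) + (\<Sum>t\<in>U. E t *s t)"
    by (simp add: E_def sum_negf)
  also have "\<dots> = (\<Sum>t\<in>S. E t *s t)"
    by (rule sum.subset_diff[OF assms(3,2), symmetric])
  finally have "\<forall>t\<in>S. E t = 0"
    using assms(1) \<open>(\<Sum>s\<in>S - U. _) \<in> B\<close> unfolding indep_mod_def by simp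
  thus "\<forall>s\<in>S - U. e s = 0" by (auto simp: E_def)
qed

context
  fixes A1 B1 A2 B2 A B :: "'b set" and g1 g2 :: "'b \<Rightarrow> 'b"
  assumes sA1: "subspace A1" and sB1: "subspace B1" and sA2: "subspace A2" and sB2: "subspace B2"
    and lin1: "Vector_Spaces.linear scale scale g1" and lin2: "Vector_Spaces.linear scale scale g2"
    and A: "A = {g1 a + g2 b | a b. a \<in> A1 \<and> b \<in> A2}"
    and B: "B = {g1 a + g2 b | a b. a \<in> B1 \<and> b \<in> B2}"
begin

interpretation L1: Vector_Spaces.linear scale scale g1 by (rule lin1)
interpretation L2: Vector_Spaces.linear scale scale g2 by (rule lin2)

lemma qdim_sum_le: "qdim scale A B \<le> qdim scale A1 B1 + qdim scale A2 B2"
proof (rule qdim_le)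
  fix S assume S: "finite S" "S \<subseteq> A" "indep_mod scale B S"
  have "\<forall>s\<in>S. \<exists>a b. a \<in> A1 \<and> b \<in> A2 \<and> s = g1 a + g2 b" using S(2) unfolding A by blast
  then obtain a b where ab: "\<And>s. s \<in> S \<Longrightarrow> a s \<in> A1 \<and> b s \<in> A2 \<and> s = g1 (a s) + g2 (b s)"
    by metis
  obtain U where US: "U \<subseteq> S" and Uind: "indep_mod_family scale B2 b U"
    and "\<And>s. s \<in> S - U \<Longrightarrow> \<exists>c. b s - (\<Sum>u\<in>U. c u *s b u) \<in> B2"
    using obtain_maximal_indep_mod_subfamily[OF sB2 S(1)] by blast
  then obtain C where C: "\<And>s. s \<in> S - U \<Longrightarrow> b s - (\<Sum>u\<in>U. C s u *s b u) \<in> B2" by metis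
  have finU: "finite U" using US S(1) finite_subset by blast
  text \<open>Reduce each \<open>s \<in> S - U\<close> modulo the span of \<open>U\<close> so that its second component lies in \<open>B2\<close>;
    the first components of the reduced vectors are then independent modulo \<open>B1\<close>.\<close>
  define al where "al s = a s - (\<Sum>u\<in>U. C s u *s a u)" for s
  define be where "be s = b s - (\<Sum>u\<in>U. C s u *s b u)" for s
  have alA: "al s \<in> A1" if "s \<in> S" for s
    unfolding al_def using ab US that sA1 by (intro subspace_diff subspace_sum subspace_scale) auto
  have dec: "s - (\<Sum>u\<in>U. C s u *s u) = g1 (al s) + g2 (be s)" if "s \<in> S" for s
  proof -
    have "(\<Sum>u\<in>U. C s u *s u) = (\<Sum>u\<in>U. C s u *s (g1 (a u) + g2 (b u)))"
      using ab US by (intro sum.cong) auto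
    also have "\<dots> = g1 (\<Sum>u\<in>U. C s u *s a u) + g2 (\<Sum>u\<in>U. C s u *s b u)"
      by (simp add: L1.sum L2.sum L1.scale L2.scale scale_right_distrib sum.distrib)
    finally show ?thesis using ab[OF that] by (simp add: al_def be_def L1.diff L2.diff)
  qed
  have indal: "indep_mod_family scale B1 al (S - U)" unfolding indep_mod_family_def
  proof (intro allI impI)
    fix e assume he: "(\<Sum>s\<in>S - U. e s *s al s) \<in> B1"
    have beS: "(\<Sum>s\<in>S - U. e s *s be s) \<in> B2" using C sB2 unfolding be_def
      by (intro subspace_sum subspace_scale) auto
    have "(\<Sum>s\<in>S - U. e s *s (s - (\<Sum>u\<in>U. C s u *s u)))
        = g1 (\<Sum>s\<in>S - U. e s *s al s) + g2 (\<Sum>s\<in>S - U. e s *s be s)"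
      using dec by (simp add: L1.sum L2.sum L1.scale L2.scale scale_right_distrib sum.distrib)
    hence "(\<Sum>s\<in>S - U. e s *s (s - (\<Sum>u\<in>U. C s u *s u))) \<in> B"
      using he beS unfolding B by blast
    thus "\<forall>s\<in>S - U. e s = 0"
      using indep_mod_family_reduce[OF S(3,1) US, of C] unfolding indep_mod_family_def by blast
  qed
  have "b ` U \<subseteq> A2" using ab US by blast
  hence "enat (card U) \<le> qdim scale A2 B2"
    using card_le_qdim[OF Uind finU subspace_0[OF sB2]] by blast
  moreover have "enat (card (S - U)) \<le> qdim scale A1 B1"
    using card_le_qdim[OF indal] S(1) subspace_0[OF sB1] alA by auto
  moreover have "card S = card (S - U) + card U"
    using card_Diff_subset[OF finU US] card_mono[OF S(1) US] by simp
  ultimately show "enat (card S) \<le> qdim scale A1 B1 + qdim scale A2 B2"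
    by (metis add_mono plus_enat_simps(1))
qed

context
  fixes W1 W2 :: "'b set"
  assumes W1: "subspace W1" and W2: "subspace W2"
    and sub: "A1 \<subseteq> W1" "B1 \<subseteq> W1" "A2 \<subseteq> W2" "B2 \<subseteq> W2"
    and direct: "\<And>a b. a \<in> W1 \<Longrightarrow> b \<in> W2 \<Longrightarrow> g1 a + g2 b = 0 \<Longrightarrow> a = 0 \<and> b = 0"
begin

lemma indep_mod_family_Plus:
  assumes S1: "S1 \<subseteq> A1" "indep_mod scale B1 S1" and S2: "S2 \<subseteq> A2" "indep_mod scale B2 S2"
    and fin: "finite S1" "finite S2"
  shows "indep_mod_family scale B (case_sum g1 g2) (Inl ` S1 \<union> Inr ` S2)"
  unfolding indep_mod_family_def
proof (intro allI impI)
  fix c assume hc: "(\<Sum>i\<in>Inl ` S1 \<union> Inr ` S2. c i *s case_sum g1 g2 i) \<in> B"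
  define X1 where "X1 = (\<Sum>s\<in>S1. c (Inl s) *s s)"
  define X2 where "X2 = (\<Sum>s\<in>S2. c (Inr s) *s s)"
  have "(\<Sum>i\<in>Inl ` S1 \<union> Inr ` S2. c i *s case_sum g1 g2 i)
      = (\<Sum>i\<in>Inl ` S1. c i *s case_sum g1 g2 i) + (\<Sum>i\<in>Inr ` S2. c i *s case_sum g1 g2 i)"
    by (rule sum.union_disjoint) (auto simp: fin)
  also have "\<dots> = g1 X1 + g2 X2"
    by (simp add: sum.reindex X1_def X2_def L1.sum L2.sum L1.scale L2.scale)
  finally obtain b1 b2 where bb: "b1 \<in> B1" "b2 \<in> B2" "g1 X1 + g2 X2 = g1 b1 + g2 b2"
    using hc unfolding B by auto
  have "X1 \<in> A1" unfolding X1_def using S1 sA1 by (intro subspace_sum subspace_scale) auto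
  hence "X1 - b1 \<in> W1" using sub bb(1) by (intro subspace_diff[OF W1]) auto
  have "X2 \<in> A2" unfolding X2_def using S2 sA2 by (intro subspace_sum subspace_scale) auto
  hence "X2 - b2 \<in> W2" using sub bb(2) by (intro subspace_diff[OF W2]) auto
  have "g1 (X1 - b1) + g2 (X2 - b2) = 0" using bb(3) by (simp add: L1.diff L2.diff algebra_simps)
  hence "X1 - b1 = 0 \<and> X2 - b2 = 0"
    using direct \<open>X1 - b1 \<in> W1\<close> \<open>X2 - b2 \<in> W2\<close> by blast
  hence "X1 \<in> B1" "X2 \<in> B2" using bb by auto
  hence "\<forall>s\<in>S1. c (Inl s) = 0" "\<forall>s\<in>S2. c (Inr s) = 0"
    using S1(2) S2(2) unfolding indep_mod_def X1_def X2_def by (metis (no_types))+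
  thus "\<forall>i\<in>Inl ` S1 \<union> Inr ` S2. c i = 0" by auto
qed

lemma qdim_sum_ge: "qdim scale A1 B1 + qdim scale A2 B2 \<le> qdim scale A B"
  unfolding qdim_def[of scale A1 B1] qdim_def[of scale A2 B2]
proof (rule enat_Sup_plus_Sup_le)
  have empty: "enat (card {}) \<in> {enat (card S) |S. finite S \<and> S \<subseteq> A' \<and> indep_mod (*s) B' S}" for A' B'
    by (rule CollectI, rule exI[of _ "{}"]) (simp add: indep_mod_def)
  show "{enat (card S) |S. finite S \<and> S \<subseteq> A1 \<and> indep_mod (*s) B1 S} \<noteq> {}"
    "{enat (card S) |S. finite S \<and> S \<subseteq> A2 \<and> indep_mod (*s) B2 S} \<noteq> {}"
    using empty[of A1 B1] empty[of A2 B2] by (metis empty_iff)+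
  fix x y
  assume "x \<in> {enat (card S) |S. finite S \<and> S \<subseteq> A1 \<and> indep_mod (*s) B1 S}"
  then obtain S1 where S1: "x = enat (card S1)" "finite S1" "S1 \<subseteq> A1" "indep_mod (*s) B1 S1" by blast
  assume "y \<in> {enat (card S) |S. finite S \<and> S \<subseteq> A2 \<and> indep_mod (*s) B2 S}"
  then obtain S2 where S2: "y = enat (card S2)" "finite S2" "S2 \<subseteq> A2" "indep_mod (*s) B2 S2" by blast
  let ?I = "Inl ` S1 \<union> Inr ` S2"
  have "card ?I = card S1 + card S2"
    by (subst card_Un_disjoint) (auto simp: S1 S2 card_image)
  moreover have "case_sum g1 g2 ` ?I \<subseteq> A"
  proof
    fix v assume "v \<in> case_sum g1 g2 ` ?I"
    then consider s where "s \<in> S1" "v = g1 s" | t where "t \<in> S2" "v = g2 t" by auto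
    thus "v \<in> A"
    proof cases
      case 1 thus ?thesis unfolding A using S1 subspace_0[OF sA2] L2.zero by force
    next
      case 2 thus ?thesis unfolding A using S2 subspace_0[OF sA1] L1.zero by force
    qed
  qed
  moreover have "0 \<in> B" unfolding B using subspace_0[OF sB1] subspace_0[OF sB2]
    by (metis (mono_tags, lifting) L1.zero L2.zero add_0 mem_Collect_eq)
  ultimately show "x + y \<le> qdim scale A B"
    using card_le_qdim[OF indep_mod_family_Plus[OF S1(3,4) S2(3,4) S1(2) S2(2)]] S1 S2 by simp
qed

lemma qdim_direct_sum: "qdim scale A B = qdim scale A1 B1 + qdim scale A2 B2"
  using qdim_sum_le qdim_sum_ge by (rule antisym)

end

end

end

section \<open>Koszul chains\<close>

definition koszul_sign :: "nat \<Rightarrow> nat set \<Rightarrow> 'a::comm_ring_1" where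
  "koszul_sign i J = (-1) ^ card {j\<in>J. j < i}"

definition chain_smul :: "('r \<Rightarrow> 'm \<Rightarrow> 'm) \<Rightarrow> 'r \<Rightarrow> (nat set \<Rightarrow> 'm) \<Rightarrow> nat set \<Rightarrow> 'm" where
  "chain_smul act r f = (\<lambda>J. act r (f J))"

text \<open>On chains supported in \<open>{..<m}\<close> this is the sign \<open>(-1)^p\<close> of the mapping cone differential.\<close>
definition chain_twist :: "('r::comm_ring_1 \<Rightarrow> 'm \<Rightarrow> 'm) \<Rightarrow> nat \<Rightarrow> (nat set \<Rightarrow> 'm) \<Rightarrow> nat set \<Rightarrow> 'm" where
  "chain_twist act m f = (\<lambda>J. act (koszul_sign m J) (f J))"

text \<open>A chain of the Koszul complex on \<open>m + 1\<close> elements splits as \<open>a + b \<and> e\<^sub>m\<close> with \<open>a, b\<close>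
  not involving \<open>e\<^sub>m\<close>: \<open>chain_avoid\<close> and \<open>chain_wedge\<close> embed the two parts,
  \<open>chain_contract\<close> extracts \<open>b\<close>.\<close>
definition chain_avoid :: "nat \<Rightarrow> (nat set \<Rightarrow> 'm::zero) \<Rightarrow> nat set \<Rightarrow> 'm" where
  "chain_avoid m a = (\<lambda>J. if m \<in> J then 0 else a J)"

definition chain_wedge :: "nat \<Rightarrow> (nat set \<Rightarrow> 'm::zero) \<Rightarrow> nat set \<Rightarrow> 'm" where
  "chain_wedge m b = (\<lambda>J. if m \<in> J then b (J - {m}) else 0)"

definition chain_contract :: "nat \<Rightarrow> (nat set \<Rightarrow> 'm::zero) \<Rightarrow> nat set \<Rightarrow> 'm" where
  "chain_contract m c = (\<lambda>J. if m \<in> J then 0 else c (insert m J))"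

definition homotopy_term ::
    "('r::comm_ring_1 \<Rightarrow> 'm::zero \<Rightarrow> 'm) \<Rightarrow> nat \<Rightarrow> 'r \<Rightarrow> (nat set \<Rightarrow> 'm) \<Rightarrow> nat set \<Rightarrow> 'm" where
  "homotopy_term act j \<rho> b = (\<lambda>J. if j \<in> J then act (koszul_sign j J * \<rho>) (b (J - {j})) else 0)"

text \<open>Wedging with \<open>\<Sum>j<m. r\<^sub>j e\<^sub>j\<close>.\<close>
definition koszul_homotopy :: "('r::comm_ring_1 \<Rightarrow> 'm::ab_group_add \<Rightarrow> 'm) \<Rightarrow> nat \<Rightarrow> (nat \<Rightarrow> 'r)
    \<Rightarrow> (nat set \<Rightarrow> 'm) \<Rightarrow> nat set \<Rightarrow> 'm" where
  "koszul_homotopy act m r b = (\<lambda>J. \<Sum>j<m. homotopy_term act j (r j) b J)"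

lemma koszul_sign_square: "koszul_sign i J * koszul_sign i J = (1::'a::comm_ring_1)"
  by (simp add: koszul_sign_def flip: power_add mult_2)

lemma koszul_sign_insert:
  "i \<notin> J \<Longrightarrow> koszul_sign j (insert i J) = (if i < j then - koszul_sign j J else (koszul_sign j J :: 'a::comm_ring_1))"
proof -
  assume i: "i \<notin> J"
  have fin: "finite {x\<in>J. x < j}" by (rule finite_subset[of _ "{..<j}"]) auto
  show ?thesis
  proof (cases "i < j")
    case True
    hence "{x\<in>insert i J. x < j} = insert i {x\<in>J. x < j}" by auto
    thus ?thesis using True i fin by (simp add: koszul_sign_def)
  next
    case False
    hence "{x\<in>insert i J. x < j} = {x\<in>J. x < j}" by auto
    thus ?thesis using False by (simp add: koszul_sign_def)
  qed
qed

lemma koszul_sign_remove: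
  "j \<in> J \<Longrightarrow> koszul_sign i (J - {j}) = (if j < i then - koszul_sign i J else (koszul_sign i J :: 'a::comm_ring_1))"
proof -
  assume j: "j \<in> J"
  have "koszul_sign i J = koszul_sign i (insert j (J - {j}))" using j by (simp add: insert_absorb)
  also have "\<dots> = (if j < i then - koszul_sign i (J - {j}) else (koszul_sign i (J - {j}) :: 'a))"
    by (rule koszul_sign_insert) simp
  finally show ?thesis by auto
qed

lemma koszul_sign_insert_self: "koszul_sign j (insert j J) = koszul_sign j J"
proof -
  have "{x\<in>insert j J. x < j} = {x\<in>J. x < j}" by auto
  thus ?thesis by (simp add: koszul_sign_def)
qed

lemma koszul_sign_remove_self: "koszul_sign j (J - {j}) = koszul_sign j J"
proof -
  have "{x\<in>J - {j}. x < j} = {x\<in>J. x < j}" by auto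
  thus ?thesis by (simp add: koszul_sign_def)
qed

lemma koszul_sign_anticommute:
  assumes "j \<in> J" "i \<notin> J" "i \<noteq> j"
  shows "koszul_sign i J * koszul_sign j (insert i J) + koszul_sign j J * koszul_sign i (J - {j})
    = (0::'a::comm_ring_1)"
  using assms by (auto simp: koszul_sign_insert koszul_sign_remove[OF assms(1)])

context module
begin

lemma kos_diff_eq: "kos_diff scale y n c J = (\<Sum>i\<in>{..<n} - J. (koszul_sign i J * y i) *s c (insert i J))"
  by (simp add: kos_diff_def koszul_sign_def)

lemma kos_diff_homotopy_term_mem:
  assumes "j < n" "j \<in> J"
  shows "kos_diff scale y n (homotopy_term scale j \<rho> b) J + homotopy_term scale j \<rho> (kos_diff scale y n b) J
    = (\<rho> * y j) *s b J"
proof -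
  let ?K = "J - {j}"
  have e1: "kos_diff scale y n (homotopy_term scale j \<rho> b) J
     = (\<Sum>i\<in>{..<n} - J. (koszul_sign i J * y i * (koszul_sign j (insert i J) * \<rho>)) *s b (insert i ?K))"
    unfolding kos_diff_eq homotopy_term_def using assms(2) by (intro sum.cong) (auto simp: insert_Diff_if)
  have "{..<n} - ?K = insert j ({..<n} - J)" using assms by auto
  hence "homotopy_term scale j \<rho> (kos_diff scale y n b) J
      = (koszul_sign j J * \<rho>) *s ((koszul_sign j ?K * y j) *s b (insert j ?K)
        + (\<Sum>i\<in>{..<n} - J. (koszul_sign i ?K * y i) *s b (insert i ?K)))"
    unfolding homotopy_term_def kos_diff_eq using assms(2) by simp
  also have "\<dots> = (koszul_sign j J * koszul_sign j J * (\<rho> * y j)) *s b J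
      + (\<Sum>i\<in>{..<n} - J. (koszul_sign j J * \<rho> * (koszul_sign i ?K * y i)) *s b (insert i ?K))"
    using assms(2) by (simp add: scale_right_distrib scale_sum_right koszul_sign_remove_self insert_absorb mult_ac)
  finally have e2: "homotopy_term scale j \<rho> (kos_diff scale y n b) J
     = (\<rho> * y j) *s b J
       + (\<Sum>i\<in>{..<n} - J. (koszul_sign j J * \<rho> * (koszul_sign i ?K * y i)) *s b (insert i ?K))"
    by (simp add: koszul_sign_square)
  have e3: "koszul_sign i J * y i * (koszul_sign j (insert i J) * \<rho>)
      + koszul_sign j J * \<rho> * (koszul_sign i ?K * y i) = 0"
    if "i \<in> {..<n} - J" for i
  proof -
    have "i \<notin> J" "i \<noteq> j" using that assms(2) by auto
    hence anti: "koszul_sign i J * koszul_sign j (insert i J) + koszul_sign j J * koszul_sign i ?K = 0"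
      using koszul_sign_anticommute[OF assms(2)] by blast
    have "koszul_sign i J * y i * (koszul_sign j (insert i J) * \<rho>)
        + koszul_sign j J * \<rho> * (koszul_sign i ?K * y i)
        = y i * \<rho> * (koszul_sign i J * koszul_sign j (insert i J) + koszul_sign j J * koszul_sign i ?K)"
      by (simp add: algebra_simps)
    thus ?thesis unfolding anti by simp
  qed
  have "kos_diff scale y n (homotopy_term scale j \<rho> b) J + homotopy_term scale j \<rho> (kos_diff scale y n b) J
     = (\<rho> * y j) *s b J + (\<Sum>i\<in>{..<n} - J. (koszul_sign i J * y i * (koszul_sign j (insert i J) * \<rho>)
          + koszul_sign j J * \<rho> * (koszul_sign i ?K * y i)) *s b (insert i ?K))"
    unfolding e1 e2 by (simp add: scale_left_distrib sum.distrib algebra_simps)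
  also have "\<dots> = (\<rho> * y j) *s b J" using e3 by simp
  finally show ?thesis .
qed

lemma kos_diff_homotopy_term_not_mem:
  assumes "j < n" "j \<notin> J"
  shows "kos_diff scale y n (homotopy_term scale j \<rho> b) J + homotopy_term scale j \<rho> (kos_diff scale y n b) J
    = (\<rho> * y j) *s b J"
proof -
  have "kos_diff scale y n (homotopy_term scale j \<rho> b) J
      = (\<Sum>i\<in>{j}. (koszul_sign i J * y i) *s homotopy_term scale j \<rho> b (insert i J))"
    unfolding kos_diff_eq using assms by (intro sum.mono_neutral_right) (auto simp: homotopy_term_def)
  also have "\<dots> = (koszul_sign j J * koszul_sign j J * (\<rho> * y j)) *s b J"
    using assms(2) by (simp add: homotopy_term_def koszul_sign_insert_self mult_ac)
  finally show ?thesis using assms(2) by (simp add: koszul_sign_square homotopy_term_def)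
qed

lemma kos_diff_homotopy_term:
  "j < n \<Longrightarrow> kos_diff scale y n (homotopy_term scale j \<rho> b) J + homotopy_term scale j \<rho> (kos_diff scale y n b) J
    = (\<rho> * y j) *s b J"
  by (cases "j \<in> J") (simp_all add: kos_diff_homotopy_term_mem kos_diff_homotopy_term_not_mem)

lemma kos_diff_add: "kos_diff scale y n (f + g) = kos_diff scale y n f + kos_diff scale y n g"
  by (rule ext) (simp add: kos_diff_eq scale_right_distrib sum.distrib)
lemma kos_diff_zero: "kos_diff scale y n 0 = 0"
  by (rule ext) (simp add: kos_diff_eq)
lemma kos_diff_chain_smul:
  "kos_diff scale y n (chain_smul scale r f) = chain_smul scale r (kos_diff scale y n f)"
proof (rule ext)
  fix J show "kos_diff scale y n (chain_smul scale r f) J = chain_smul scale r (kos_diff scale y n f) J"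
    unfolding kos_diff_eq chain_smul_def scale_sum_right by (intro sum.cong refl) (simp add: mult_ac)
qed
lemma kos_diff_chain_twist:
  "kos_diff scale y m (chain_twist scale m f) = - chain_twist scale m (kos_diff scale y m f)"
proof (rule ext)
  fix J
  have "kos_diff scale y m (chain_twist scale m f) J
      = (\<Sum>i\<in>{..<m} - J. (- (koszul_sign m J * (koszul_sign i J * y i))) *s f (insert i J))"
    unfolding kos_diff_eq chain_twist_def by (intro sum.cong) (auto simp: koszul_sign_insert mult_ac)
  thus "kos_diff scale y m (chain_twist scale m f) J = (- chain_twist scale m (kos_diff scale y m f)) J"
    by (simp add: chain_twist_def kos_diff_eq scale_sum_right sum_negf)
qed

lemma chain_twist_add: "chain_twist scale m (f + g) = chain_twist scale m f + chain_twist scale m g"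
  by (rule ext) (simp add: chain_twist_def scale_right_distrib)
lemma chain_twist_zero: "chain_twist scale m 0 = 0"
  by (rule ext) (simp add: chain_twist_def)
lemma chain_twist_minus: "chain_twist scale m (- f) = - chain_twist scale m f"
  by (rule ext) (simp add: chain_twist_def)
lemma chain_twist_chain_twist: "chain_twist scale m (chain_twist scale m f) = f"
  by (rule ext) (simp add: chain_twist_def koszul_sign_square)
lemma chain_twist_chain_smul:
  "chain_twist scale m (chain_smul scale r f) = chain_smul scale r (chain_twist scale m f)"
  by (rule ext) (simp add: chain_twist_def chain_smul_def mult.commute)

lemma chain_smul_add: "chain_smul scale r (f + g) = chain_smul scale r f + chain_smul scale r g"
  by (rule ext) (simp add: chain_smul_def scale_right_distrib)
lemma chain_smul_add_left: "chain_smul scale (a + b) f = chain_smul scale a f + chain_smul scale b f"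
  by (rule ext) (simp add: chain_smul_def scale_left_distrib)
lemma chain_smul_chain_smul: "chain_smul scale a (chain_smul scale b f) = chain_smul scale (a * b) f"
  by (rule ext) (simp add: chain_smul_def)
lemma chain_smul_zero_left: "chain_smul scale 0 f = 0"
  by (rule ext) (simp add: chain_smul_def)
lemma chain_smul_zero: "chain_smul scale r 0 = 0"
  by (rule ext) (simp add: chain_smul_def)
lemma chain_smul_one: "chain_smul scale 1 f = f"
  by (rule ext) (simp add: chain_smul_def)

lemma homotopy_term_add:
  "homotopy_term scale j \<rho> (f + g) = homotopy_term scale j \<rho> f + homotopy_term scale j \<rho> (g :: nat set \<Rightarrow> 'b)"
  by (rule ext) (simp add: homotopy_term_def scale_right_distrib)
lemma homotopy_term_zero: "homotopy_term scale j \<rho> (0 :: nat set \<Rightarrow> 'b) = 0"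
  by (rule ext) (simp add: homotopy_term_def)
lemma homotopy_term_chain_smul:
  "homotopy_term scale j \<rho> (chain_smul scale a f) = chain_smul scale a (homotopy_term scale j \<rho> f)"
  by (rule ext) (simp add: homotopy_term_def chain_smul_def mult_ac)
lemma koszul_homotopy_add:
  "koszul_homotopy scale m r (f + g) = koszul_homotopy scale m r f + koszul_homotopy scale m r (g :: nat set \<Rightarrow> 'b)"
  by (rule ext) (simp add: koszul_homotopy_def homotopy_term_add sum.distrib)
lemma koszul_homotopy_zero: "koszul_homotopy scale m r (0 :: nat set \<Rightarrow> 'b) = 0"
  by (rule ext) (simp add: koszul_homotopy_def homotopy_term_zero)
lemma koszul_homotopy_chain_smul:
  "koszul_homotopy scale m r (chain_smul scale a f) = chain_smul scale a (koszul_homotopy scale m r f)"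
  by (rule ext)
    (simp only: koszul_homotopy_def homotopy_term_chain_smul, simp add: chain_smul_def scale_sum_right)

lemma chain_avoid_add: "chain_avoid m (f + g) = chain_avoid m f + chain_avoid m (g :: nat set \<Rightarrow> 'b)"
  by (rule ext) (simp add: chain_avoid_def)
lemma chain_wedge_add: "chain_wedge m (f + g) = chain_wedge m f + chain_wedge m (g :: nat set \<Rightarrow> 'b)"
  by (rule ext) (simp add: chain_wedge_def)
lemma chain_avoid_zero: "chain_avoid m (0 :: nat set \<Rightarrow> 'b) = 0"
  by (rule ext) (simp add: chain_avoid_def)
lemma chain_wedge_zero: "chain_wedge m (0 :: nat set \<Rightarrow> 'b) = 0"
  by (rule ext) (simp add: chain_wedge_def)
lemma chain_avoid_chain_smul: "chain_avoid m (chain_smul scale a f) = chain_smul scale a (chain_avoid m f)"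
  by (rule ext) (simp add: chain_avoid_def chain_smul_def)
lemma chain_wedge_chain_smul: "chain_wedge m (chain_smul scale a f) = chain_smul scale a (chain_wedge m f)"
  by (rule ext) (simp add: chain_wedge_def chain_smul_def)

lemma kos_diff_koszul_homotopy:
  "kos_diff scale y m (koszul_homotopy scale m r b) + koszul_homotopy scale m r (kos_diff scale y m b)
    = chain_smul scale (\<Sum>j<m. r j * y j) b"
  (is "?lhs = _")
proof (rule ext)
  fix J
  let ?D = "kos_diff scale y m" and ?h = "\<lambda>j. homotopy_term scale j (r j)"
  have "?D (koszul_homotopy scale m r b) J = (\<Sum>j<m. ?D (?h j b) J)"
    unfolding kos_diff_eq koszul_homotopy_def by (simp add: scale_sum_right) (rule sum.swap)
  hence "?lhs J = (\<Sum>j<m. ?D (?h j b) J + ?h j (?D b) J)"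
    by (simp add: koszul_homotopy_def sum.distrib)
  also have "\<dots> = (\<Sum>j<m. (r j * y j) *s b J)"
    by (intro sum.cong refl kos_diff_homotopy_term) simp
  finally show "?lhs J = chain_smul scale (\<Sum>j<m. r j * y j) b J"
    by (simp add: chain_smul_def scale_sum_left)
qed

lemma kos_diff_chain_avoid:
  assumes "\<And>i. i < m \<Longrightarrow> Z i = y i"
  shows "kos_diff scale Z (Suc m) (chain_avoid m a) = chain_avoid m (kos_diff scale y m a)"
proof (rule ext)
  fix J
  show "kos_diff scale Z (Suc m) (chain_avoid m a) J = chain_avoid m (kos_diff scale y m a) J"
  proof (cases "m \<in> J")
    case True thus ?thesis by (simp add: kos_diff_eq chain_avoid_def)
  next
    case False
    have sp: "{..<Suc m} - J = insert m ({..<m} - J)" using False by auto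
    have "kos_diff scale Z (Suc m) (chain_avoid m a) J
        = (\<Sum>i\<in>insert m ({..<m} - J). (koszul_sign i J * Z i) *s chain_avoid m a (insert i J))"
      unfolding kos_diff_eq sp ..
    also have "\<dots> = (\<Sum>i\<in>{..<m} - J. (koszul_sign i J * Z i) *s chain_avoid m a (insert i J))"
      by (subst sum.insert) (auto simp: chain_avoid_def)
    also have "\<dots> = (\<Sum>i\<in>{..<m} - J. (koszul_sign i J * y i) *s a (insert i J))"
      using assms False by (intro sum.cong refl) (auto simp: chain_avoid_def)
    finally show ?thesis using False by (simp add: chain_avoid_def kos_diff_eq)
  qed
qed

lemma kos_diff_chain_wedge:
  assumes "\<And>i. i < m \<Longrightarrow> Z i = y i"
  shows "kos_diff scale Z (Suc m) (chain_wedge m b)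
    = chain_wedge m (kos_diff scale y m b) + chain_avoid m (chain_twist scale m (chain_smul scale (Z m) b))"
    (is "_ = ?rhs")
proof (rule ext)
  fix J
  show "kos_diff scale Z (Suc m) (chain_wedge m b) J = ?rhs J"
  proof (cases "m \<in> J")
    case True
    have sp: "{..<Suc m} - J = {..<m} - (J - {m})" using True by (auto simp: less_Suc_eq)
    have "kos_diff scale Z (Suc m) (chain_wedge m b) J
        = (\<Sum>i\<in>{..<m} - (J - {m}). (koszul_sign i J * Z i) *s chain_wedge m b (insert i J))"
      unfolding kos_diff_eq sp ..
    also have "\<dots> = (\<Sum>i\<in>{..<m} - (J - {m}). (koszul_sign i (J - {m}) * y i) *s b (insert i (J - {m})))"
      using assms True
      by (intro sum.cong refl) (auto simp: chain_wedge_def koszul_sign_remove insert_Diff_if)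
    also have "\<dots> = kos_diff scale y m b (J - {m})" unfolding kos_diff_eq ..
    finally show ?thesis using True by (simp add: chain_avoid_def chain_wedge_def)
  next
    case False
    have sp: "{..<Suc m} - J = insert m ({..<m} - J)" using False by auto
    have "(\<Sum>i\<in>{..<m} - J. (koszul_sign i J * Z i) *s chain_wedge m b (insert i J)) = 0"
      using False by (intro sum.neutral) (auto simp: chain_wedge_def)
    thus ?thesis using False unfolding kos_diff_eq sp
      by (simp add: chain_wedge_def chain_avoid_def chain_twist_def chain_smul_def)
  qed
qed

lemma kos_chainsD: "f \<in> kos_chains n p \<Longrightarrow> f I \<noteq> 0 \<Longrightarrow> I \<subseteq> {..<n} \<and> int (card I) = p"
  by (simp add: kos_chains_def)

lemma kos_chains_support_subset:
  "g \<in> kos_chains n p \<Longrightarrow> (\<And>I. f I \<noteq> 0 \<Longrightarrow> g I \<noteq> 0) \<Longrightarrow> f \<in> kos_chains n p"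
  unfolding kos_chains_def by blast

lemma kos_chains_zero: "0 \<in> kos_chains n p"
  by (simp add: kos_chains_def)

lemma kos_chains_add:
  assumes "f \<in> kos_chains n p" "g \<in> kos_chains n p"
  shows "f + g \<in> kos_chains n p"
proof -
  have "(f + g) I \<noteq> 0 \<Longrightarrow> f I \<noteq> 0 \<or> g I \<noteq> 0" for I by auto
  thus ?thesis using assms unfolding kos_chains_def by blast
qed

lemma kos_chains_minus: "f \<in> kos_chains n p \<Longrightarrow> - f \<in> kos_chains n p"
  by (erule kos_chains_support_subset) simp

lemma kos_chains_diff: "f \<in> kos_chains n p \<Longrightarrow> g \<in> kos_chains n p \<Longrightarrow> f - g \<in> kos_chains n p"
  unfolding diff_conv_add_uminus by (intro kos_chains_add kos_chains_minus)

lemma kos_chains_chain_smul: "f \<in> kos_chains n p \<Longrightarrow> chain_smul scale r f \<in> kos_chains n p"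
  by (erule kos_chains_support_subset) (auto simp: chain_smul_def)

lemma kos_chains_chain_twist: "f \<in> kos_chains n p \<Longrightarrow> chain_twist scale m f \<in> kos_chains n p"
  by (erule kos_chains_support_subset) (auto simp: chain_twist_def)

lemma kos_chains_sum:
  assumes "\<And>j. j \<in> A \<Longrightarrow> F j \<in> kos_chains n p"
  shows "(\<lambda>J. \<Sum>j\<in>A. F j J) \<in> kos_chains n p"
  unfolding kos_chains_def
proof (intro CollectI allI impI)
  fix I assume "(\<Sum>j\<in>A. F j I) \<noteq> 0"
  then obtain j where "j \<in> A" "F j I \<noteq> 0" by (meson sum.neutral)
  thus "I \<subseteq> {..<n} \<and> int (card I) = p" using assms kos_chainsD by blast
qed

lemma kos_diff_kos_chains:
  assumes "c \<in> kos_chains n p"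
  shows "kos_diff scale y n c \<in> kos_chains n (p - 1)"
  unfolding kos_chains_def
proof (intro CollectI allI impI)
  fix J assume nz: "kos_diff scale y n c J \<noteq> 0"
  have "\<exists>i\<in>{..<n} - J. c (insert i J) \<noteq> 0"
  proof (rule ccontr)
    assume "\<not> ?thesis"
    hence "(\<Sum>i\<in>{..<n} - J. (koszul_sign i J * y i) *s c (insert i J)) = 0" by (intro sum.neutral) auto
    thus False using nz by (simp add: kos_diff_eq)
  qed
  then obtain i where i: "i \<in> {..<n} - J" "c (insert i J) \<noteq> 0" by blast
  hence "insert i J \<subseteq> {..<n}" "int (card (insert i J)) = p" using kos_chainsD[OF assms] by auto
  moreover have "finite J" using calculation(1) by (rule finite_subset[THEN finite_insert[THEN iffD1]]) simp
  ultimately show "J \<subseteq> {..<n} \<and> int (card J) = p - 1" using i by auto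
qed

lemma kos_chains_insert:
  assumes "b \<in> kos_chains n p" "j < n'" "n \<le> n'" "\<And>J. f J \<noteq> 0 \<Longrightarrow> j \<in> J \<and> b (J - {j}) \<noteq> 0"
  shows "f \<in> kos_chains n' (p + 1)"
  unfolding kos_chains_def
proof (intro CollectI allI impI)
  fix J assume "f J \<noteq> 0"
  hence J: "j \<in> J" "b (J - {j}) \<noteq> 0" using assms(4) by auto
  have sub: "J - {j} \<subseteq> {..<n}" and card: "int (card (J - {j})) = p"
    using kos_chainsD[OF assms(1) J(2)] by blast+
  hence "finite (J - {j})" using finite_subset by blast
  hence "finite J" by simp
  hence "card J = Suc (card (J - {j}))" using J(1) by (rule card_Suc_Diff1[symmetric])
  thus "J \<subseteq> {..<n'} \<and> int (card J) = p + 1" using sub card J(1) assms(2,3) by auto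
qed

lemma homotopy_term_kos_chains:
  "j < m \<Longrightarrow> b \<in> kos_chains m p \<Longrightarrow> homotopy_term scale j \<rho> b \<in> kos_chains m (p + 1)"
  by (erule kos_chains_insert[where j = j]) (auto simp: homotopy_term_def split: if_splits)

lemma koszul_homotopy_kos_chains:
  "b \<in> kos_chains m p \<Longrightarrow> koszul_homotopy scale m r b \<in> kos_chains m (p + 1)"
  unfolding koszul_homotopy_def by (rule kos_chains_sum) (auto intro: homotopy_term_kos_chains)

lemma chain_avoid_kos_chains: "a \<in> kos_chains m p \<Longrightarrow> chain_avoid m a \<in> kos_chains (Suc m) p"
  unfolding kos_chains_def chain_avoid_def by (auto simp: lessThan_Suc)

lemma chain_wedge_kos_chains: "b \<in> kos_chains m p \<Longrightarrow> chain_wedge m b \<in> kos_chains (Suc m) (p + 1)"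
  by (erule kos_chains_insert[where j = m]) (auto simp: chain_wedge_def split: if_splits)

lemma kos_chains_decompose:
  assumes "c \<in> kos_chains (Suc m) p"
  shows "chain_avoid m c \<in> kos_chains m p" "chain_contract m c \<in> kos_chains m (p - 1)"
    and "c = chain_avoid m (chain_avoid m c) + chain_wedge m (chain_contract m c)"
proof -
  show "chain_avoid m c \<in> kos_chains m p" using assms
    by (auto simp: kos_chains_def chain_avoid_def lessThan_Suc)
  show "chain_contract m c \<in> kos_chains m (p - 1)" unfolding kos_chains_def
  proof (intro CollectI allI impI)
    fix J assume "chain_contract m c J \<noteq> 0"
    hence J: "m \<notin> J" "c (insert m J) \<noteq> 0" by (auto simp: chain_contract_def split: if_splits)
    have s1: "insert m J \<subseteq> {..<Suc m}" and c1: "int (card (insert m J)) = p"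
      using kos_chainsD[OF assms J(2)] by auto
    have "finite (insert m J)" using s1 by (rule finite_subset) simp
    hence "finite J" by simp
    hence "int (card J) = p - 1" using c1 J(1) by simp
    moreover have "J \<subseteq> {..<m}" using s1 J(1) by (auto simp: less_Suc_eq)
    ultimately show "J \<subseteq> {..<m} \<and> int (card J) = p - 1" by simp
  qed
  show "c = chain_avoid m (chain_avoid m c) + chain_wedge m (chain_contract m c)"
    by (rule ext) (auto simp: chain_avoid_def chain_wedge_def chain_contract_def insert_absorb)
qed

lemma chain_avoid_plus_wedge_eq_0:
  assumes "a \<in> kos_chains m p" "b \<in> kos_chains m q" "chain_avoid m a + chain_wedge m b = 0"
  shows "a = 0 \<and> b = 0"
proof
  have "a J = 0" for J
    proof (cases "m \<in> J")
      case True thus ?thesis using assms(1) by (auto simp: kos_chains_def)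
    next
      case False thus ?thesis using fun_cong[OF assms(3), of J] by (simp add: chain_avoid_def chain_wedge_def)
    qed
  thus "a = 0" by (simp add: fun_eq_iff)
  have "b J = 0" for J
    proof (cases "m \<in> J")
      case True thus ?thesis using assms(2) by (auto simp: kos_chains_def)
    next
      case False thus ?thesis
        using fun_cong[OF assms(3), of "insert m J"] by (simp add: chain_avoid_def chain_wedge_def)
    qed
  thus "b = 0" by (simp add: fun_eq_iff)
qed

end

section \<open>The Koszul complex of \<open>(y, u + \<Sum>j<m. r\<^sub>j y\<^sub>j)\<close> as a mapping cone\<close>

text \<open>If \<open>Z\<^sub>i = y\<^sub>i\<close> for \<open>i < m\<close> and \<open>Z\<^sub>m = u + (\<Sum>j<m. r\<^sub>j y\<^sub>j)\<close>, the Koszul complex of \<open>Z\<close> is the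
  mapping cone of multiplication by \<open>Z\<^sub>m\<close> on that of \<open>y\<close>. Correcting the first component of a
  cone chain by the homotopy turns the cone differential into \<open>(a, b) \<mapsto> (cone_diff a b, \<partial>b)\<close>,
  in which the null-homotopic part \<open>\<Sum>j<m. r\<^sub>j y\<^sub>j\<close> of \<open>Z\<^sub>m\<close> no longer appears.\<close>
definition cone_chain :: "('r::comm_ring_1 \<Rightarrow> 'm::ab_group_add \<Rightarrow> 'm) \<Rightarrow> nat \<Rightarrow> (nat \<Rightarrow> 'r)
    \<Rightarrow> (nat set \<Rightarrow> 'm) \<Rightarrow> (nat set \<Rightarrow> 'm) \<Rightarrow> nat set \<Rightarrow> 'm" where
  "cone_chain act m r a b = chain_avoid m (a + chain_twist act m (koszul_homotopy act m r b)) + chain_wedge m b"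

definition cone_diff :: "('r::comm_ring_1 \<Rightarrow> 'm::ab_group_add \<Rightarrow> 'm) \<Rightarrow> (nat \<Rightarrow> 'r) \<Rightarrow> nat \<Rightarrow> 'r
    \<Rightarrow> (nat set \<Rightarrow> 'm) \<Rightarrow> (nat set \<Rightarrow> 'm) \<Rightarrow> nat set \<Rightarrow> 'm" where
  "cone_diff act y m u a b = kos_diff act y m a + chain_twist act m (chain_smul act u b)"

context module
begin

lemma kos_cycles_iff: "c \<in> kos_cycles scale y n p \<longleftrightarrow> c \<in> kos_chains n p \<and> kos_diff scale y n c = 0"
  by (simp add: kos_cycles_def zero_fun_def)

lemma cone_chain_zero: "cone_chain scale m r 0 0 = 0"
  by (simp add: cone_chain_def koszul_homotopy_zero chain_twist_zero chain_avoid_zero chain_wedge_zero)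

lemma cone_chain_kos_chains:
  assumes "a \<in> kos_chains m p" "b \<in> kos_chains m (p - 1)"
  shows "cone_chain scale m r a b \<in> kos_chains (Suc m) p"
proof -
  have "koszul_homotopy scale m r b \<in> kos_chains m p"
    using koszul_homotopy_kos_chains[OF assms(2)] by simp
  hence "chain_avoid m (a + chain_twist scale m (koszul_homotopy scale m r b)) \<in> kos_chains (Suc m) p"
    using assms(1) by (intro chain_avoid_kos_chains kos_chains_add kos_chains_chain_twist)
  thus ?thesis
    using chain_wedge_kos_chains[OF assms(2)] unfolding cone_chain_def by (intro kos_chains_add) simp_all
qed

lemma kos_chains_cone_chain_obtain:
  assumes "c \<in> kos_chains (Suc m) p"
  obtains a b where "a \<in> kos_chains m p" "b \<in> kos_chains m (p - 1)" "c = cone_chain scale m r a b"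
proof
  let ?b = "chain_contract m c"
  let ?a = "chain_avoid m c - chain_twist scale m (koszul_homotopy scale m r ?b)"
  show b: "?b \<in> kos_chains m (p - 1)" using kos_chains_decompose(2)[OF assms] .
  show "?a \<in> kos_chains m p"
    using kos_chains_decompose(1)[OF assms] koszul_homotopy_kos_chains[OF b]
    by (intro kos_chains_diff kos_chains_chain_twist) simp_all
  show "c = cone_chain scale m r ?a ?b"
    using kos_chains_decompose(3)[OF assms] by (simp add: cone_chain_def)
qed

lemma cone_chain_eq_0:
  assumes "a \<in> kos_chains m p" "b \<in> kos_chains m (p - 1)" "cone_chain scale m r a b = 0"
  shows "a = 0 \<and> b = 0"
proof -
  have "chain_twist scale m (koszul_homotopy scale m r b) \<in> kos_chains m p"
    using koszul_homotopy_kos_chains[OF assms(2)] kos_chains_chain_twist by simp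
  hence "a + chain_twist scale m (koszul_homotopy scale m r b) = 0 \<and> b = 0"
    using chain_avoid_plus_wedge_eq_0[OF kos_chains_add[OF assms(1)] assms(2)] assms(3)
    unfolding cone_chain_def by blast
  thus ?thesis by (auto simp: koszul_homotopy_zero chain_twist_zero)
qed

lemma kos_diff_cone_chain:
  assumes Zy: "\<And>i. i < m \<Longrightarrow> Z i = y i" and Zm: "Z m = u + (\<Sum>j<m. r j * y j)"
  shows "kos_diff scale Z (Suc m) (cone_chain scale m r a b)
    = cone_chain scale m r (cone_diff scale y m u a b) (kos_diff scale y m b)"
proof -
  let ?D = "kos_diff scale y m"
  let ?h = "koszul_homotopy scale m r"
  let ?X = "a + chain_twist scale m (?h b)"
  have 1: "kos_diff scale Z (Suc m) (cone_chain scale m r a b)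
      = chain_avoid m (?D ?X + chain_twist scale m (chain_smul scale (Z m) b)) + chain_wedge m (?D b)"
    unfolding cone_chain_def
    by (simp add: kos_diff_add kos_diff_chain_avoid[OF Zy] kos_diff_chain_wedge[OF Zy] chain_avoid_add add_ac)
  have 2: "?D ?X = ?D a - chain_twist scale m (?D (?h b))"
    by (simp add: kos_diff_add kos_diff_chain_twist)
  have 3: "chain_twist scale m (chain_smul scale (Z m) b)
      = chain_twist scale m (chain_smul scale u b) + chain_twist scale m (?D (?h b))
        + chain_twist scale m (?h (?D b))"
    by (simp add: Zm chain_smul_add_left chain_twist_add flip: kos_diff_koszul_homotopy add.assoc)
  show ?thesis unfolding 1 2 3 by (simp add: cone_chain_def cone_diff_def algebra_simps)
qed

lemma kos_cycles_cone_iff: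
  assumes Zy: "\<And>i. i < m \<Longrightarrow> Z i = y i" and Zm: "Z m = u + (\<Sum>j<m. r j * y j)"
  shows "c \<in> kos_cycles scale Z (Suc m) p \<longleftrightarrow>
    (\<exists>a b. a \<in> kos_chains m p \<and> b \<in> kos_cycles scale y m (p - 1)
       \<and> cone_diff scale y m u a b = 0 \<and> c = cone_chain scale m r a b)"
proof
  assume "c \<in> kos_cycles scale Z (Suc m) p"
  hence c: "c \<in> kos_chains (Suc m) p" "kos_diff scale Z (Suc m) c = 0" by (auto simp: kos_cycles_iff)
  obtain a b where ab: "a \<in> kos_chains m p" "b \<in> kos_chains m (p - 1)" "c = cone_chain scale m r a b"
    using kos_chains_cone_chain_obtain[OF c(1)] .
  have "cone_diff scale y m u a b \<in> kos_chains m (p - 1)"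
    unfolding cone_diff_def using ab by (intro kos_chains_add kos_chains_chain_twist kos_chains_chain_smul kos_diff_kos_chains)
  moreover have "kos_diff scale y m b \<in> kos_chains m (p - 1 - 1)" using kos_diff_kos_chains[OF ab(2)] .
  moreover have "cone_chain scale m r (cone_diff scale y m u a b)
      (kos_diff scale y m b) = 0"
    using c(2) by (simp add: ab(3) kos_diff_cone_chain[OF Zy Zm])
  ultimately have "cone_diff scale y m u a b = 0 \<and> kos_diff scale y m b = 0"
    by (rule cone_chain_eq_0)
  thus "\<exists>a b. a \<in> kos_chains m p \<and> b \<in> kos_cycles scale y m (p - 1)
       \<and> cone_diff scale y m u a b = 0 \<and> c = cone_chain scale m r a b"
    using ab by (auto simp: kos_cycles_iff)
next
  assume "\<exists>a b. a \<in> kos_chains m p \<and> b \<in> kos_cycles scale y m (p - 1)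
       \<and> cone_diff scale y m u a b = 0 \<and> c = cone_chain scale m r a b"
  then obtain a b where ab: "a \<in> kos_chains m p" "b \<in> kos_cycles scale y m (p - 1)"
      "cone_diff scale y m u a b = 0" "c = cone_chain scale m r a b"
    by blast
  have "c \<in> kos_chains (Suc m) p"
    using ab(1,2,4) cone_chain_kos_chains by (simp add: kos_cycles_iff)
  moreover have "kos_diff scale Z (Suc m) c = 0"
    using ab(2,3,4) by (simp add: kos_cycles_iff kos_diff_cone_chain[OF Zy Zm] cone_chain_zero)
  ultimately show "c \<in> kos_cycles scale Z (Suc m) p" by (simp add: kos_cycles_iff)
qed

lemma kos_boundaries_cone_iff:
  assumes Zy: "\<And>i. i < m \<Longrightarrow> Z i = y i" and Zm: "Z m = u + (\<Sum>j<m. r j * y j)"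
  shows "x \<in> kos_boundaries scale Z (Suc m) p \<longleftrightarrow>
    (\<exists>a b. a \<in> kos_chains m (p + 1) \<and> b \<in> kos_chains m p \<and>
       x = cone_chain scale m r (cone_diff scale y m u a b) (kos_diff scale y m b))"
proof
  assume "x \<in> kos_boundaries scale Z (Suc m) p"
  then obtain c where c: "c \<in> kos_chains (Suc m) (p + 1)" "x = kos_diff scale Z (Suc m) c"
    unfolding kos_boundaries_def by blast
  obtain a b where "a \<in> kos_chains m (p + 1)" "b \<in> kos_chains m p" "c = cone_chain scale m r a b"
    using kos_chains_cone_chain_obtain[OF c(1)] by auto
  thus "\<exists>a b. a \<in> kos_chains m (p + 1) \<and> b \<in> kos_chains m p \<and>
       x = cone_chain scale m r (cone_diff scale y m u a b) (kos_diff scale y m b)"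
    using c(2) kos_diff_cone_chain[OF Zy Zm] by blast
next
  assume "\<exists>a b. a \<in> kos_chains m (p + 1) \<and> b \<in> kos_chains m p \<and>
       x = cone_chain scale m r (cone_diff scale y m u a b) (kos_diff scale y m b)"
  then obtain a b where ab: "a \<in> kos_chains m (p + 1)" "b \<in> kos_chains m p"
    "x = cone_chain scale m r (cone_diff scale y m u a b) (kos_diff scale y m b)"
    by blast
  hence "x = kos_diff scale Z (Suc m) (cone_chain scale m r a b)"
    by (simp add: kos_diff_cone_chain[OF Zy Zm])
  moreover have "cone_chain scale m r a b \<in> kos_chains (Suc m) (p + 1)"
    using ab by (intro cone_chain_kos_chains) simp_all
  ultimately show "x \<in> kos_boundaries scale Z (Suc m) p"
    unfolding kos_boundaries_def by blast
qed


lemma kos_cycles_cone_zero: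
  assumes Zy: "\<And>i. i < m \<Longrightarrow> Z i = y i" and Zm: "Z m = (\<Sum>j<m. r j * y j)"
  shows "kos_cycles scale Z (Suc m) p
    = {cone_chain scale m r a b | a b. a \<in> kos_cycles scale y m p \<and> b \<in> kos_cycles scale y m (p - 1)}"
proof -
  have Zm0: "Z m = 0 + (\<Sum>j<m. r j * y j)" using Zm by simp
  show ?thesis
  proof (rule set_eqI)
    fix c show "c \<in> kos_cycles scale Z (Suc m) p \<longleftrightarrow>
      c \<in> {cone_chain scale m r a b | a b. a \<in> kos_cycles scale y m p \<and> b \<in> kos_cycles scale y m (p - 1)}"
      using kos_cycles_cone_iff[OF Zy Zm0, of c p]
      by (auto simp: cone_diff_def chain_smul_zero_left chain_twist_zero kos_cycles_iff)
  qed
qed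

lemma kos_boundaries_cone_zero:
  assumes Zy: "\<And>i. i < m \<Longrightarrow> Z i = y i" and Zm: "Z m = (\<Sum>j<m. r j * y j)"
  shows "kos_boundaries scale Z (Suc m) p
    = {cone_chain scale m r a b | a b. a \<in> kos_boundaries scale y m p \<and> b \<in> kos_boundaries scale y m (p - 1)}"
proof -
  have Zm0: "Z m = 0 + (\<Sum>j<m. r j * y j)" using Zm by simp
  show ?thesis
  proof (rule set_eqI)
    fix x show "x \<in> kos_boundaries scale Z (Suc m) p \<longleftrightarrow>
      x \<in> {cone_chain scale m r a b | a b. a \<in> kos_boundaries scale y m p \<and> b \<in> kos_boundaries scale y m (p - 1)}"
      using kos_boundaries_cone_iff[OF Zy Zm0, of x p] unfolding kos_boundaries_def
      by (auto simp: cone_diff_def chain_smul_zero_left chain_twist_zero)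
  qed
qed

lemma kos_exact_cone_zero:
  assumes Zy: "\<And>i. i < m \<Longrightarrow> Z i = y i" and Zm: "Z m = (\<Sum>j<m. r j * y j)"
    and exact: "kos_exact scale y m"
  shows "kos_exact scale Z (Suc m)"
  unfolding kos_exact_def
proof (intro allI subsetI)
  fix p c assume "c \<in> kos_cycles scale Z (Suc m) p"
  then obtain a b where c: "c = cone_chain scale m r a b"
    and "a \<in> kos_cycles scale y m p" "b \<in> kos_cycles scale y m (p - 1)"
    using kos_cycles_cone_zero[OF Zy Zm, of p] by auto
  hence "a \<in> kos_boundaries scale y m p" "b \<in> kos_boundaries scale y m (p - 1)"
    using exact unfolding kos_exact_def by blast+
  thus "c \<in> kos_boundaries scale Z (Suc m) p"
    using kos_boundaries_cone_zero[OF Zy Zm, of p] c by auto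
qed

lemma kos_exact_cone_unit:
  assumes Zy: "\<And>i. i < m \<Longrightarrow> Z i = y i" and Zm: "Z m = u + (\<Sum>j<m. r j * y j)"
    and uv: "u * v = 1"
  shows "kos_exact scale Z (Suc m)"
  unfolding kos_exact_def
proof (intro allI subsetI)
  fix p c assume "c \<in> kos_cycles scale Z (Suc m) p"
  then obtain a b where ab: "a \<in> kos_chains m p"
      "cone_diff scale y m u a b = 0" "c = cone_chain scale m r a b"
    using kos_cycles_cone_iff[OF Zy Zm] by blast
  text \<open>Since \<open>u\<close> is a unit, \<open>(a, b) = \<partial>(0, v (\<plusminus>a))\<close> in the cone.\<close>
  define b' where "b' = chain_smul scale v (chain_twist scale m a)"
  have "kos_diff scale y m b' = b"
    using ab(2) unfolding cone_diff_def b'_def kos_diff_chain_smul kos_diff_chain_twist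
      eq_neg_iff_add_eq_0[symmetric]
    by (simp add: chain_twist_minus chain_twist_chain_twist chain_smul_chain_smul mult.commute uv chain_smul_one)
  moreover have "chain_twist scale m (chain_smul scale u b') = a"
    unfolding b'_def
    by (simp add: chain_smul_chain_smul uv chain_twist_chain_smul[symmetric] chain_twist_chain_twist chain_smul_one)
  ultimately have "c = cone_chain scale m r (cone_diff scale y m u 0 b') (kos_diff scale y m b')"
    using ab(3) by (simp add: cone_diff_def kos_diff_zero)
  moreover have "b' \<in> kos_chains m p"
    unfolding b'_def using ab(1) by (intro kos_chains_chain_smul kos_chains_chain_twist)
  ultimately show "c \<in> kos_boundaries scale Z (Suc m) p"
    using kos_boundaries_cone_iff[OF Zy Zm] kos_chains_zero by blast
qed


lemma kos_hdim_eq_qdim: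
  "kos_hdim phi scale y n p
     = qdim (\<lambda>a. chain_smul scale (phi a)) (kos_cycles scale y n p) (kos_boundaries scale y n p)"
  by (simp add: kos_hdim_def chain_smul_def[abs_def])

lemma chain_smul_vector_space:
  "alg_hom phi \<Longrightarrow> vector_space (\<lambda>a (f :: nat set \<Rightarrow> 'b). chain_smul scale (phi a) f)"
  unfolding alg_hom_def
  by unfold_locales (simp_all add: chain_smul_add chain_smul_add_left chain_smul_chain_smul chain_smul_one)

lemma kos_diff_linear:
  assumes "alg_hom phi"
  shows "Vector_Spaces.linear (\<lambda>a. chain_smul scale (phi a)) (\<lambda>a. chain_smul scale (phi a)) (kos_diff scale y n)"
  using chain_smul_vector_space[OF assms] unfolding Vector_Spaces.linear_iff
  by (simp add: kos_diff_add kos_diff_chain_smul)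

lemma kos_chains_subspace:
  assumes "alg_hom phi"
  shows "module.subspace (\<lambda>a (f :: nat set \<Rightarrow> 'b). chain_smul scale (phi a) f) (kos_chains n p)"
proof -
  interpret V: vector_space "\<lambda>a (f :: nat set \<Rightarrow> 'b). chain_smul scale (phi a) f"
    by (rule chain_smul_vector_space[OF assms])
  show ?thesis
    by (simp add: V.subspace_def kos_chains_zero kos_chains_add kos_chains_chain_smul)
qed

lemma kos_cycles_subspace:
  assumes "alg_hom phi"
  shows "module.subspace (\<lambda>a (f :: nat set \<Rightarrow> 'b). chain_smul scale (phi a) f) (kos_cycles scale y n p)"
proof -
  interpret V: vector_space "\<lambda>a (f :: nat set \<Rightarrow> 'b). chain_smul scale (phi a) f"
    by (rule chain_smul_vector_space[OF assms])
  show ?thesis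
    by (simp add: V.subspace_def kos_cycles_iff kos_chains_zero kos_chains_add kos_chains_chain_smul
        kos_diff_zero kos_diff_add kos_diff_chain_smul chain_smul_zero)
qed

lemma kos_boundaries_subspace:
  assumes "alg_hom phi"
  shows "module.subspace (\<lambda>a (f :: nat set \<Rightarrow> 'b). chain_smul scale (phi a) f) (kos_boundaries scale y n p)"
  unfolding kos_boundaries_def
  using module_hom.subspace_image[OF kos_diff_linear[OF assms, unfolded linear_iff_module_hom]
      kos_chains_subspace[OF assms]] .

lemma kos_hdim_out_of_range:
  assumes "alg_hom phi" "p < 0 \<or> int n < p"
  shows "kos_hdim phi scale y n p = 0"
proof -
  have "c = 0" if "c \<in> kos_chains n p" for c :: "nat set \<Rightarrow> 'b"
  proof
    fix I show "c I = 0 I"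
    proof (rule ccontr)
      assume "c I \<noteq> 0 I"
      hence "I \<subseteq> {..<n}" "int (card I) = p" using kos_chainsD[OF that] by auto
      moreover have "card I \<le> n" using card_mono[OF _ \<open>I \<subseteq> {..<n}\<close>] by simp
      ultimately show False using assms(2) by linarith
    qed
  qed
  hence "kos_cycles scale y n p \<subseteq> kos_boundaries scale y n p"
    using kos_chains_zero kos_diff_zero unfolding kos_boundaries_def by (force simp: kos_cycles_iff)
  thus ?thesis
    unfolding kos_hdim_eq_qdim by (rule vector_space.qdim_eq_0[OF chain_smul_vector_space[OF assms(1)]])
qed

lemma kos_hdim_cone_zero:
  assumes ah: "alg_hom phi"
    and Zy: "\<And>i. i < m \<Longrightarrow> Z i = y i" and Zm: "Z m = (\<Sum>j<m. r j * y j)"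
  shows "kos_hdim phi scale Z (Suc m) p = kos_hdim phi scale y m (p - 1) + kos_hdim phi scale y m p"
proof -
  let ?sc = "\<lambda>a (f :: nat set \<Rightarrow> 'b). chain_smul scale (phi a) f"
  let ?g = "\<lambda>b. chain_avoid m (chain_twist scale m (koszul_homotopy scale m r b)) + chain_wedge m b"
  interpret V: vector_space ?sc by (rule chain_smul_vector_space[OF ah])
  have cone: "cone_chain scale m r a b = chain_avoid m a + ?g b" for a b
    by (simp add: cone_chain_def chain_avoid_add add.assoc)
  have lin1: "Vector_Spaces.linear ?sc ?sc (chain_avoid m)"
    unfolding Vector_Spaces.linear_iff using V.vector_space_axioms
    by (simp add: chain_avoid_add chain_avoid_chain_smul)
  have lin2: "Vector_Spaces.linear ?sc ?sc ?g"
    unfolding Vector_Spaces.linear_iff using V.vector_space_axioms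
    by (simp add: chain_avoid_add chain_wedge_add koszul_homotopy_add chain_twist_add
        chain_avoid_chain_smul chain_wedge_chain_smul koszul_homotopy_chain_smul chain_twist_chain_smul
        chain_smul_add add_ac)
  have cyc: "kos_cycles scale y m q \<subseteq> kos_chains m q" for q
    by (auto simp: kos_cycles_iff)
  have bd: "kos_boundaries scale y m q \<subseteq> kos_chains m q" for q
    unfolding kos_boundaries_def using kos_diff_kos_chains by fastforce
  have direct: "a = 0 \<and> b = 0"
    if "a \<in> kos_chains m p" "b \<in> kos_chains m (p - 1)" "chain_avoid m a + ?g b = 0" for a b
    using cone_chain_eq_0[OF that(1,2), of r] that(3) unfolding cone by blast
  have "qdim ?sc (kos_cycles scale Z (Suc m) p) (kos_boundaries scale Z (Suc m) p)
     = qdim ?sc (kos_cycles scale y m p) (kos_boundaries scale y m p)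
       + qdim ?sc (kos_cycles scale y m (p - 1)) (kos_boundaries scale y m (p - 1))"
    by (rule V.qdim_direct_sum[OF kos_cycles_subspace[OF ah] kos_boundaries_subspace[OF ah]
          kos_cycles_subspace[OF ah] kos_boundaries_subspace[OF ah] lin1 lin2
          kos_cycles_cone_zero[OF Zy Zm, unfolded cone] kos_boundaries_cone_zero[OF Zy Zm, unfolded cone]
          kos_chains_subspace[OF ah] kos_chains_subspace[OF ah] cyc bd cyc bd direct])
  thus ?thesis by (simp add: kos_hdim_eq_qdim add.commute)
qed

end

section \<open>Polynomials in the generators\<close>

lemma alg_hom_0: "alg_hom phi \<Longrightarrow> phi 0 = 0"
  unfolding alg_hom_def by (metis add_cancel_right_right add_0)

lemma alg_hom_diff: "alg_hom phi \<Longrightarrow> phi (a - b) = phi a - phi b"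
  unfolding alg_hom_def by (metis add_diff_cancel diff_add_cancel)

lemma alg_hom_unit: "alg_hom phi \<Longrightarrow> d \<noteq> 0 \<Longrightarrow> phi d * phi (inverse d) = 1"
  unfolding alg_hom_def by (metis right_inverse)

lemma k_subalg_0: "0 \<in> k_subalg phi x n"
proof -
  have "mpoly_eval phi x 0 = 0" "mpoly_vars_in n 0" by (simp_all add: mpoly_eval_def mpoly_vars_in_def)
  thus ?thesis unfolding k_subalg_def by (metis (mono_tags, lifting) mem_Collect_eq)
qed

lemma k_subalg_1: "alg_hom phi \<Longrightarrow> 1 \<in> k_subalg phi x n"
proof -
  assume "alg_hom phi"
  hence "mpoly_eval phi x (Poly_Mapping.single 0 1) = 1" "mpoly_vars_in n (Poly_Mapping.single 0 1)"
    by (simp_all add: mpoly_eval_def alg_hom_def mpoly_vars_in_def)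
  thus ?thesis unfolding k_subalg_def by (metis (mono_tags, lifting) mem_Collect_eq)
qed

lemma generator_in_ideal_gen:
  assumes "0 \<in> S" "1 \<in> S" "i < l"
  shows "g i \<in> ideal_gen S g l"
proof -
  have "g i = (\<Sum>j<l. if j = i then g j else 0)" using assms(3) by simp
  also have "\<dots> = (\<Sum>j<l. (if j = i then 1 else 0) * g j)" by (rule sum.cong) auto
  finally show ?thesis unfolding ideal_gen_def using assms(1,2)
    by (intro CollectI exI[of _ "\<lambda>j. if j = i then 1 else 0"]) simp
qed

lemma ideal_gen_mono: "S \<subseteq> T \<Longrightarrow> ideal_gen S g l \<subseteq> ideal_gen T g l"
  unfolding ideal_gen_def by blast

lemma ideal_gen_UNIV_add:
  assumes "a \<in> ideal_gen UNIV g l" "b \<in> ideal_gen UNIV g l"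
  shows "a + b \<in> ideal_gen UNIV g l"
proof -
  obtain r s where "a = (\<Sum>i<l. r i * g i)" "b = (\<Sum>i<l. s i * g i)"
    using assms unfolding ideal_gen_def by blast
  hence "a + b = (\<Sum>i<l. (r i + s i) * g i)" by (simp add: sum.distrib distrib_right)
  thus ?thesis unfolding ideal_gen_def by (intro CollectI exI[of _ "\<lambda>i. r i + s i"]) simp
qed

lemma ideal_gen_UNIV_mult:
  assumes "a \<in> ideal_gen UNIV g l"
  shows "c * a \<in> ideal_gen UNIV g l"
proof -
  obtain r where "a = (\<Sum>i<l. r i * g i)" using assms unfolding ideal_gen_def by blast
  hence "c * a = (\<Sum>i<l. (c * r i) * g i)" by (simp add: sum_distrib_left mult.assoc)
  thus ?thesis unfolding ideal_gen_def by (intro CollectI exI[of _ "\<lambda>i. c * r i"]) simp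
qed

lemma ideal_gen_UNIV_sum:
  "(\<And>a. a \<in> A \<Longrightarrow> f a \<in> ideal_gen UNIV g l) \<Longrightarrow> sum f A \<in> ideal_gen UNIV g l"
proof (induction A rule: infinite_finite_induct)
  case (insert a A) thus ?case by (simp add: ideal_gen_UNIV_add)
qed (simp_all add: ideal_gen_def, (rule exI[of _ "\<lambda>_. 0"], simp)+)

lemma mpoly_eval_minus_const_in_ideal_gen:
  assumes ah: "alg_hom phi" and vq: "mpoly_vars_in n q" and x: "\<And>i. i < n \<Longrightarrow> x i \<in> ideal_gen UNIV g l"
  shows "mpoly_eval phi x q - phi (Poly_Mapping.lookup q 0) \<in> ideal_gen UNIV g l"
proof -
  define T where "T mo = phi (Poly_Mapping.lookup q mo) * (\<Prod>i\<in>Poly_Mapping.keys mo. x i ^ Poly_Mapping.lookup mo i)" for mo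
  have "T mo \<in> ideal_gen UNIV g l" if mo: "mo \<in> Poly_Mapping.keys q" "mo \<noteq> 0" for mo
  proof -
    obtain i0 where i0: "i0 \<in> Poly_Mapping.keys mo" using mo(2) keys_eq_empty by blast
    have "i0 < n" using vq mo(1) i0 unfolding mpoly_vars_in_def by blast
    have "Poly_Mapping.lookup mo i0 \<noteq> 0" using i0 in_keys_iff by metis
    hence "T mo = (phi (Poly_Mapping.lookup q mo) * x i0 ^ (Poly_Mapping.lookup mo i0 - 1)
        * (\<Prod>i\<in>Poly_Mapping.keys mo - {i0}. x i ^ Poly_Mapping.lookup mo i)) * x i0"
      unfolding T_def using i0 by (simp add: prod.remove mult_ac power_eq_if)
    thus ?thesis using ideal_gen_UNIV_mult x[OF \<open>i0 < n\<close>] by simp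
  qed
  hence "(\<Sum>mo\<in>Poly_Mapping.keys q - {0}. T mo) \<in> ideal_gen UNIV g l"
    by (intro ideal_gen_UNIV_sum) auto
  moreover have "mpoly_eval phi x q = phi (Poly_Mapping.lookup q 0) + (\<Sum>mo\<in>Poly_Mapping.keys q - {0}. T mo)"
  proof (cases "0 \<in> Poly_Mapping.keys q")
    case True thus ?thesis unfolding mpoly_eval_def T_def by (simp add: sum.remove)
  next
    case False
    hence "Poly_Mapping.lookup q 0 = 0" using in_keys_iff by metis
    thus ?thesis using False alg_hom_0[OF ah] unfolding mpoly_eval_def T_def by simp
  qed
  ultimately show ?thesis by simp
qed

section \<open>The index\<close>

lemma alternating_sum_consecutive:
  fixes f :: "int \<Rightarrow> int"
  assumes "f (-1) = 0"
  shows "(\<Sum>p=0..N. (-1) ^ (p + 1) * (f (int p - 1) + f (int p))) = (-1) ^ (N + 1) * f (int N)"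
proof (induction N)
  case (Suc N)
  have "(\<Sum>p=0..Suc N. (-1) ^ (p + 1) * (f (int p - 1) + f (int p)))
     = (-1) ^ (N + 1) * f (int N) + (-1) ^ (N + 2) * (f (int N) + f (int (Suc N)))"
    using Suc by simp
  also have "\<dots> = (-1) ^ (Suc N + 1) * f (int (Suc N))" by (simp add: algebra_simps)
  finally show ?case .
qed (use assms in simp)

context module
begin

lemma kos_index_eq_0_if_hdim_shift:
  assumes ah: "alg_hom phi" and fin: "kos_index_finite phi scale y m"
    and shift: "\<And>p. kos_hdim phi scale Z (m + 1) p
      = kos_hdim phi scale y m (p - 1) + kos_hdim phi scale y m p"
  shows "kos_index_finite phi scale Z (m + 1) \<and> kos_index phi scale Z (m + 1) = 0"
proof
  have finite: "kos_hdim phi scale y m p \<noteq> \<infinity>" for p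
  proof (cases "p < 0 \<or> int m < p")
    case True thus ?thesis using kos_hdim_out_of_range[OF ah True] by simp
  next
    case False
    hence "p = int (nat p)" "nat p \<le> m" by auto
    thus ?thesis using fin unfolding kos_index_finite_def by metis
  qed
  thus "kos_index_finite phi scale Z (m + 1)"
    unfolding kos_index_finite_def shift by (simp only: plus_eq_infty_iff_enat) blast
  define f where "f p = int (the_enat (kos_hdim phi scale y m p))" for p
  have "f (-1) = 0" "f (int (m + 1)) = 0"
    unfolding f_def using kos_hdim_out_of_range[OF ah] by (simp_all add: zero_enat_def)
  moreover have "int (the_enat (kos_hdim phi scale Z (m + 1) p)) = f (p - 1) + f p" for p
    using finite[of "p - 1"] finite[of p] unfolding f_def shift by (auto simp: not_infinity_eq)
  ultimately show "kos_index phi scale Z (m + 1) = 0"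
    unfolding kos_index_def using alternating_sum_consecutive[of f "m + 1"] by simp
qed

end

theorem proposition2p5:
  fixes phi :: "'k::field \<Rightarrow> 'r::comm_ring_1"
    and act :: "'r \<Rightarrow> 'm::ab_group_add \<Rightarrow> 'm"
    and x y :: "nat \<Rightarrow> 'r" and n m :: nat
    and q :: "(nat \<Rightarrow>\<^sub>0 nat) \<Rightarrow>\<^sub>0 'k" and lam :: 'k
  assumes "alg_hom phi"
    and "module act"
    and "\<forall>i<m. y i \<in> k_subalg phi x n"
    and "ideal_gen (k_subalg phi x n) y m = ideal_gen (k_subalg phi x n) x n"
    and "mpoly_vars_in n q"
    and "(\<lambda>i. if i = m then lam else 0)
           \<in> taylor_spectrum phi act (\<lambda>i. if i < m then y i else if i = m then mpoly_eval phi x q else 0) (m + 1)"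
  shows "(\<lambda>_. 0) \<in> taylor_spectrum phi act y m \<and> lam = Poly_Mapping.lookup q 0
    \<and> (\<forall>p::int. kos_hdim phi act
           (tuple_sub phi (\<lambda>i. if i < m then y i else if i = m then mpoly_eval phi x q else 0)
                          (\<lambda>i. if i = m then lam else 0)) (m + 1) p
         = kos_hdim phi act y m (p - 1) + kos_hdim phi act y m p)
    \<and> (kos_index_finite phi act y m \<longrightarrow>
         kos_index_finite phi act
           (tuple_sub phi (\<lambda>i. if i < m then y i else if i = m then mpoly_eval phi x q else 0)
                          (\<lambda>i. if i = m then lam else 0)) (m + 1)
       \<and> kos_index phi act
           (tuple_sub phi (\<lambda>i. if i < m then y i else if i = m then mpoly_eval phi x q else 0)
                          (\<lambda>i. if i = m then lam else 0)) (m + 1) = 0)"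
proof -
  note ah = assms(1)
  interpret module act by (rule assms(2))
  define Z where "Z = tuple_sub phi (\<lambda>i. if i < m then y i else if i = m then mpoly_eval phi x q else 0)
    (\<lambda>i. if i = m then lam else 0)"
  have "x i \<in> ideal_gen UNIV y m" if "i < n" for i
    using generator_in_ideal_gen[OF k_subalg_0 k_subalg_1[OF ah] that] assms(4) ideal_gen_mono by blast
  then obtain r where r: "mpoly_eval phi x q - phi (Poly_Mapping.lookup q 0) = (\<Sum>j<m. r j * y j)"
    using mpoly_eval_minus_const_in_ideal_gen[OF ah assms(5)] unfolding ideal_gen_def by blast
  have Zy: "\<And>i. i < m \<Longrightarrow> Z i = y i" by (simp add: Z_def tuple_sub_def alg_hom_0[OF ah])
  have Zm: "Z m = phi (Poly_Mapping.lookup q 0 - lam) + (\<Sum>j<m. r j * y j)"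
    using r by (simp add: Z_def tuple_sub_def alg_hom_diff[OF ah] algebra_simps)
  have not_exact: "\<not> kos_exact act Z (Suc m)" using assms(6) by (simp add: taylor_spectrum_def Z_def)
  have lam: "lam = Poly_Mapping.lookup q 0"
    using kos_exact_cone_unit[OF Zy Zm alg_hom_unit[OF ah]] not_exact by force
  hence Zm0: "Z m = (\<Sum>j<m. r j * y j)" using Zm alg_hom_0[OF ah] by simp
  have "\<not> kos_exact act y m" using kos_exact_cone_zero[OF Zy Zm0] not_exact by blast
  hence "(\<lambda>_. 0) \<in> taylor_spectrum phi act y m"
    by (simp add: taylor_spectrum_def tuple_sub_def alg_hom_0[OF ah])
  moreover have shift:
    "kos_hdim phi act Z (m + 1) p = kos_hdim phi act y m (p - 1) + kos_hdim phi act y m p" for p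
    using kos_hdim_cone_zero[OF ah Zy Zm0] by simp
  ultimately show ?thesis
    using lam kos_index_eq_0_if_hdim_shift[OF ah _ shift] unfolding Z_def[symmetric] by blast
qed

end
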